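(* Let $G$ be any group and let $\nu(G)$ be the group described in the context. Then: (i) for every $n\geq 0$, $[G,G^\varphi]^{(n)}=[G^{(n)},(G^{(n)})^\varphi]$ (computed inside $\nu(G)$); (ii) for every $n\geq 1$, $\gamma_{n+1}([G,G^\varphi])=[\gamma_{n}(G'),G'^{\varphi}]=[G',\gamma_{n}(G')^{\varphi}]$ (computed inside $\nu(G)$).
   Context: Conventions: ${}^gh=ghg^{-1}$ and $[g,h]=ghg^{-1}h^{-1}$. For a group $G$ let $G^\varphi$ be an isomorphic copy of $G$ via an isomorphism $\varphi:G\to G^\varphi$, $g\mapsto g^\varphi$. The group $\nu(G)$ is the quotient of the free product $G\ast G^\varphi$ by the normal subgroup generated by all words ${}^{g_3}[g_1,g_2^\varphi]\cdot[{}^{g_3}g_1,({}^{g_3}g_2)^\varphi]^{-1}$ and ${}^{g_3^\varphi}[g_1,g_2^\varphi]\cdot[{}^{g_3}g_1,({}^{g_3}g_2)^\varphi]^{-1}$, for all $g_1,g_2,g_3\in G$. For subgroups $A,B\le G$, $[A,B^\varphi]$ denotes the subgroup of $\nu(G)$ generated by all $[a,b^\varphi]$, $a\in A$, $b\in B$. The subgroup $[G,G^\varphi]$ is isomorphic to the non-abelian tensor square $G\otimes G$ of Brown and Loday. $G^{(n)}$ denotes the $n$-th derived subgroup ($G^{(0)}=G$), $\gamma_n$ the $n$-th term of the lower central series ($\gamma_1(H)=H$), and $G'=G^{(1)}$. *)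

theory Defs
  imports "HOL-Algebra.Algebra"
begin

definition comm_set :: "('a, 'b) monoid_scheme \<Rightarrow> 'a set \<Rightarrow> 'a set \<Rightarrow> 'a set" where
  "comm_set G A B = (\<Union>a\<in>A. \<Union>b\<in>B. {a \<otimes>\<^bsub>G\<^esub> b \<otimes>\<^bsub>G\<^esub> inv\<^bsub>G\<^esub> a \<otimes>\<^bsub>G\<^esub> inv\<^bsub>G\<^esub> b})"

definition comm_subgroup :: "('a, 'b) monoid_scheme \<Rightarrow> 'a set \<Rightarrow> 'a set \<Rightarrow> 'a set" where
  "comm_subgroup G A B = generate G (comm_set G A B)"

text \<open>Lower central series: lcs G H 1 = H, lcs G H (n+1) = [lcs G H n, H].
  (lcs G H 0 = H as well; it is never used.)\<close>
fun lcs :: "('a, 'b) monoid_scheme \<Rightarrow> 'a set \<Rightarrow> nat \<Rightarrow> 'a set" where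
  "lcs G H 0 = H"
| "lcs G H (Suc 0) = H"
| "lcs G H (Suc (Suc n)) = comm_subgroup G (lcs G H (Suc n)) H"

definition derived_iter :: "('a, 'b) monoid_scheme \<Rightarrow> nat \<Rightarrow> 'a set \<Rightarrow> 'a set" where
  "derived_iter G n H = (derived G ^^ n) H"

text \<open>Letters: (g, s) with g in G; s = False means g lies in the copy G,
  s = True means the letter is g^phi in the copy G^phi.  The free product
  G * G^phi is the monoid presented on these letters by the relations
  (g,s)(h,s) = (gh,s) and (1,s) = empty word; nu(G) adds the defining relations.\<close>

type_synonym 'a nuword = "('a \<times> bool) list"

definition nu_words :: "('a, 'b) monoid_scheme \<Rightarrow> 'a nuword set" where
  "nu_words G = {w. set w \<subseteq> carrier G \<times> UNIV}"

definition winv :: "('a, 'b) monoid_scheme \<Rightarrow> 'a nuword \<Rightarrow> 'a nuword" where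
  "winv G w = rev (map (\<lambda>(g, s). (inv\<^bsub>G\<^esub> g, s)) w)"

definition wconj :: "('a, 'b) monoid_scheme \<Rightarrow> 'a nuword \<Rightarrow> 'a nuword \<Rightarrow> 'a nuword" where
  "wconj G x y = x @ y @ winv G x"

definition wcomm :: "('a, 'b) monoid_scheme \<Rightarrow> 'a nuword \<Rightarrow> 'a nuword \<Rightarrow> 'a nuword" where
  "wcomm G x y = x @ y @ winv G x @ winv G y"

inductive nu_eqv :: "('a, 'b) monoid_scheme \<Rightarrow> 'a nuword \<Rightarrow> 'a nuword \<Rightarrow> bool"
  for G where
  refl: "w \<in> nu_words G \<Longrightarrow> nu_eqv G w w"
| sym: "nu_eqv G v w \<Longrightarrow> nu_eqv G w v"
| trans: "nu_eqv G u v \<Longrightarrow> nu_eqv G v w \<Longrightarrow> nu_eqv G u w"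
| ctxt: "nu_eqv G v w \<Longrightarrow> x \<in> nu_words G \<Longrightarrow> y \<in> nu_words G
          \<Longrightarrow> nu_eqv G (x @ v @ y) (x @ w @ y)"
| mult: "g \<in> carrier G \<Longrightarrow> h \<in> carrier G
          \<Longrightarrow> nu_eqv G [(g, s), (h, s)] [(g \<otimes>\<^bsub>G\<^esub> h, s)]"
| one: "nu_eqv G [(\<one>\<^bsub>G\<^esub>, s)] []"
| rel1: "g1 \<in> carrier G \<Longrightarrow> g2 \<in> carrier G \<Longrightarrow> g3 \<in> carrier G \<Longrightarrow>
          nu_eqv G (wconj G [(g3, False)] (wcomm G [(g1, False)] [(g2, True)]))
                   (wcomm G [(g3 \<otimes>\<^bsub>G\<^esub> g1 \<otimes>\<^bsub>G\<^esub> inv\<^bsub>G\<^esub> g3, False)]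
                            [(g3 \<otimes>\<^bsub>G\<^esub> g2 \<otimes>\<^bsub>G\<^esub> inv\<^bsub>G\<^esub> g3, True)])"
| rel2: "g1 \<in> carrier G \<Longrightarrow> g2 \<in> carrier G \<Longrightarrow> g3 \<in> carrier G \<Longrightarrow>
          nu_eqv G (wconj G [(g3, True)] (wcomm G [(g1, False)] [(g2, True)]))
                   (wcomm G [(g3 \<otimes>\<^bsub>G\<^esub> g1 \<otimes>\<^bsub>G\<^esub> inv\<^bsub>G\<^esub> g3, False)]
                            [(g3 \<otimes>\<^bsub>G\<^esub> g2 \<otimes>\<^bsub>G\<^esub> inv\<^bsub>G\<^esub> g3, True)])"

definition nu_class :: "('a, 'b) monoid_scheme \<Rightarrow> 'a nuword \<Rightarrow> 'a nuword set" where
  "nu_class G w = {v. nu_eqv G w v}"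

definition nu :: "('a, 'b) monoid_scheme \<Rightarrow> 'a nuword set monoid" where
  "nu G = \<lparr> carrier = nu_class G ` nu_words G,
            monoid.mult = (\<lambda>A B. nu_class G ((SOME a. a \<in> A) @ (SOME b. b \<in> B))),
            one = nu_class G [] \<rparr>"

definition nu_inc :: "('a, 'b) monoid_scheme \<Rightarrow> 'a \<Rightarrow> 'a nuword set" where
  "nu_inc G g = nu_class G [(g, False)]"

definition nu_phi :: "('a, 'b) monoid_scheme \<Rightarrow> 'a \<Rightarrow> 'a nuword set" where
  "nu_phi G g = nu_class G [(g, True)]"

definition nu_tensor :: "('a, 'b) monoid_scheme \<Rightarrow> 'a set \<Rightarrow> 'a set \<Rightarrow> 'a nuword set set" where
  "nu_tensor G A B = generate (nu G)
     (\<Union>a\<in>A. \<Union>b\<in>B. {nu_inc G a \<otimes>\<^bsub>nu G\<^esub> nu_phi G b \<otimes>\<^bsub>nu G\<^esub>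
                       inv\<^bsub>nu G\<^esub> (nu_inc G a) \<otimes>\<^bsub>nu G\<^esub> inv\<^bsub>nu G\<^esub> (nu_phi G b)})"

end

theory Submission
  imports Defs
begin

text \<open>
  Write \<open>a \<otimes> b\<close> for \<open>[a, b\<^sup>\<phi>]\<close>. The two defining relations of \<open>\<nu>(G)\<close> say that \<open>g\<close> and
  \<open>g\<^sup>\<phi>\<close> act alike by conjugation on \<open>[G, G\<^sup>\<phi>]\<close>; hence \<open>c \<otimes> d\<close> acts on \<open>[G, G\<^sup>\<phi>]\<close>
  like \<open>[c, d]\<^sup>\<phi>\<close>, and expanding \<open>a \<otimes> cb = a \<otimes> b(b\<inverse>cb)\<close> in two ways gives
  \<open>[a, b] \<otimes> c = [a \<otimes> b, c\<^sup>\<phi>]\<close>. Together: \<open>[a \<otimes> b, c \<otimes> d] = [a, b] \<otimes> [c, d]\<close>.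
  Since all subgroups involved are normal and \<open>\<otimes>\<close> expands over products in either argument,
  this identity on generators yields \<open>[[A, B\<^sup>\<phi>], [C, D\<^sup>\<phi>]] = [[A, B], [C, D]\<^sup>\<phi>]\<close> for
  normal subgroups \<open>A, B, C, D\<close> of \<open>G\<close>; both parts of the theorem follow by induction.
\<close>

definition conjugate :: "('a, 'b) monoid_scheme \<Rightarrow> 'a \<Rightarrow> 'a \<Rightarrow> 'a" where
  "conjugate G x y = x \<otimes>\<^bsub>G\<^esub> y \<otimes>\<^bsub>G\<^esub> inv\<^bsub>G\<^esub> x"

definition commutator :: "('a, 'b) monoid_scheme \<Rightarrow> 'a \<Rightarrow> 'a \<Rightarrow> 'a" where
  "commutator G x y = x \<otimes>\<^bsub>G\<^esub> y \<otimes>\<^bsub>G\<^esub> inv\<^bsub>G\<^esub> x \<otimes>\<^bsub>G\<^esub> inv\<^bsub>G\<^esub> y"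

context group
begin

lemma mult_inv_cancel_left [simp]: "x \<in> carrier G \<Longrightarrow> y \<in> carrier G \<Longrightarrow> x \<otimes> (inv x \<otimes> y) = y"
  by (simp flip: m_assoc)

lemma inv_mult_cancel_left [simp]: "x \<in> carrier G \<Longrightarrow> y \<in> carrier G \<Longrightarrow> inv x \<otimes> (x \<otimes> y) = y"
  by (simp flip: m_assoc)

lemmas group_normalize = m_assoc inv_mult_group conjugate_def commutator_def

lemma conjugate_closed [simp]:
  "x \<in> carrier G \<Longrightarrow> y \<in> carrier G \<Longrightarrow> conjugate G x y \<in> carrier G"
  by (simp add: conjugate_def)

lemma commutator_closed [simp]:
  "x \<in> carrier G \<Longrightarrow> y \<in> carrier G \<Longrightarrow> commutator G x y \<in> carrier G"
  by (simp add: commutator_def)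

lemma conjugate_mult:
  "x \<in> carrier G \<Longrightarrow> a \<in> carrier G \<Longrightarrow> b \<in> carrier G \<Longrightarrow>
    conjugate G x (a \<otimes> b) = conjugate G x a \<otimes> conjugate G x b"
  by (simp add: group_normalize)

lemma conjugate_inv:
  "x \<in> carrier G \<Longrightarrow> a \<in> carrier G \<Longrightarrow> conjugate G x (inv a) = inv (conjugate G x a)"
  by (simp add: group_normalize)

lemma conjugate_by_mult:
  "x \<in> carrier G \<Longrightarrow> y \<in> carrier G \<Longrightarrow> a \<in> carrier G \<Longrightarrow>
    conjugate G (x \<otimes> y) a = conjugate G x (conjugate G y a)"
  by (simp add: group_normalize)

lemma conjugate_hom: "x \<in> carrier G \<Longrightarrow> conjugate G x \<in> hom G G"
  by (rule homI) (simp_all add: conjugate_mult)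

lemma commutator_conv_conjugate:
  "x \<in> carrier G \<Longrightarrow> y \<in> carrier G \<Longrightarrow> commutator G x y = x \<otimes> conjugate G y (inv x)"
  by (simp add: group_normalize)

lemma commutator_mult_left:
  "x \<in> carrier G \<Longrightarrow> y \<in> carrier G \<Longrightarrow> z \<in> carrier G \<Longrightarrow>
    commutator G (x \<otimes> y) z = conjugate G x (commutator G y z) \<otimes> commutator G x z"
  by (simp add: group_normalize)

lemma commutator_mult_right:
  "x \<in> carrier G \<Longrightarrow> y \<in> carrier G \<Longrightarrow> z \<in> carrier G \<Longrightarrow>
    commutator G x (y \<otimes> z) = commutator G x y \<otimes> conjugate G y (commutator G x z)"
  by (simp add: group_normalize)

lemma commutator_inv_left:
  "x \<in> carrier G \<Longrightarrow> y \<in> carrier G \<Longrightarrow>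
    commutator G (inv x) y = conjugate G (inv x) (inv (commutator G x y))"
  by (simp add: group_normalize)

lemma inv_commutator:
  "x \<in> carrier G \<Longrightarrow> y \<in> carrier G \<Longrightarrow> inv (commutator G x y) = commutator G y x"
  by (simp add: group_normalize)

lemma conjugate_commutator:
  "g \<in> carrier G \<Longrightarrow> a \<in> carrier G \<Longrightarrow> b \<in> carrier G \<Longrightarrow>
    conjugate G g (commutator G a b) = commutator G (conjugate G g a) (conjugate G g b)"
  by (simp add: group_normalize)

lemma normal_conjugate_closed: "D \<lhd> G \<Longrightarrow> x \<in> carrier G \<Longrightarrow> d \<in> D \<Longrightarrow> conjugate G x d \<in> D"
  unfolding conjugate_def by (rule normal.inv_op_closed2)

lemma normal_subset: "H \<lhd> G \<Longrightarrow> H \<subseteq> carrier G"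
  using normal_imp_subgroup subgroup.subset by blast

lemma comm_set_conv_commutator: "comm_set G A B = (\<Union>a\<in>A. \<Union>b\<in>B. {commutator G a b})"
  by (simp add: comm_set_def commutator_def)

lemma comm_set_closed: "A \<subseteq> carrier G \<Longrightarrow> B \<subseteq> carrier G \<Longrightarrow> comm_set G A B \<subseteq> carrier G"
  by (auto simp: comm_set_conv_commutator subset_iff)

lemma commutator_in_comm_subgroup:
  "a \<in> A \<Longrightarrow> b \<in> B \<Longrightarrow> commutator G a b \<in> comm_subgroup G A B"
  unfolding comm_subgroup_def comm_set_conv_commutator by (rule generate.incl) blast

lemma derived_eq_comm_subgroup: "derived G H = comm_subgroup G H H"
  by (simp add: derived_def comm_subgroup_def comm_set_def)

lemma comm_subgroup_commute:
  assumes "A \<subseteq> carrier G" "B \<subseteq> carrier G"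
  shows "comm_subgroup G A B = comm_subgroup G B A"
proof -
  have "comm_subgroup G S T \<subseteq> comm_subgroup G T S"
    if "S \<subseteq> carrier G" "T \<subseteq> carrier G" for S T
    unfolding comm_subgroup_def
  proof (rule generate_subgroup_incl)
    show "comm_set G S T \<subseteq> generate G (comm_set G T S)"
    proof
      fix c assume "c \<in> comm_set G S T"
      then obtain a b where ab: "a \<in> S" "b \<in> T" "c = commutator G a b"
        by (auto simp: comm_set_conv_commutator)
      then have "c = inv (commutator G b a)" using that by (auto simp: inv_commutator subset_iff)
      moreover have "commutator G b a \<in> comm_set G T S"
        using ab by (auto simp: comm_set_conv_commutator)
      ultimately show "c \<in> generate G (comm_set G T S)" by (simp add: generate.inv)
    qed
    show "subgroup (generate G (comm_set G T S)) G"
      using that by (intro generate_is_subgroup comm_set_closed)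
  qed
  then show ?thesis using assms by blast
qed

lemma generate_conjugate_closed:
  assumes S: "S \<subseteq> carrier G" and x: "x \<in> carrier G"
    and gens: "conjugate G x ` S \<subseteq> generate G S" and y: "y \<in> generate G S"
  shows "conjugate G x y \<in> generate G S"
proof -
  have "group_hom G G (conjugate G x)"
    using x by (simp add: group_hom_def group_hom_axioms_def group_axioms conjugate_hom)
  then have "conjugate G x ` generate G S = generate G (conjugate G x ` S)"
    using S by (simp add: group_hom.generate_img)
  also have "\<dots> \<subseteq> generate G S"
    using gens S by (intro generate_subgroup_incl generate_is_subgroup)
  finally show ?thesis using y by blast
qed

lemma normal_if_conjugate_closed_by_generators:
  assumes gen: "carrier G = generate G S" and S: "S \<subseteq> carrier G"
    and S_inv: "\<And>s. s \<in> S \<Longrightarrow> inv s \<in> S"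
    and D: "subgroup D G" and closed: "\<And>s d. s \<in> S \<Longrightarrow> d \<in> D \<Longrightarrow> conjugate G s d \<in> D"
  shows "D \<lhd> G"
proof -
  have "\<forall>d\<in>D. conjugate G g d \<in> D" if "g \<in> generate G S" for g
    using that
  proof (induct rule: generate.induct)
    case one
    then show ?case using D by (auto simp: subgroup.mem_carrier conjugate_def)
  next
    case (incl h)
    then show ?case using closed by blast
  next
    case (inv h)
    then show ?case using closed S_inv by blast
  next
    case (eng h1 h2)
    then have "h1 \<in> carrier G" "h2 \<in> carrier G" using gen by auto
    then show ?case using eng D by (auto simp: conjugate_by_mult subgroup.mem_carrier)
  qed
  then show ?thesis
    using gen by (intro normal_invI[OF D]) (auto simp: conjugate_def)
qed

lemma comm_subgroup_normal:
  assumes A: "A \<lhd> G" and B: "B \<lhd> G"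
  shows "comm_subgroup G A B \<lhd> G"
  unfolding comm_subgroup_def
proof (rule normal_generateI)
  have AB: "A \<subseteq> carrier G" "B \<subseteq> carrier G" using A B by (simp_all add: normal_subset)
  then show "comm_set G A B \<subseteq> carrier G" by (rule comm_set_closed)
  fix h g assume "h \<in> comm_set G A B" and g: "g \<in> carrier G"
  then obtain a b where ab: "a \<in> A" "b \<in> B" "h = commutator G a b"
    by (auto simp: comm_set_conv_commutator)
  moreover have "a \<in> carrier G" "b \<in> carrier G" using AB ab by auto
  ultimately have "g \<otimes> h \<otimes> inv g = commutator G (conjugate G g a) (conjugate G g b)"
    using g by (metis conjugate_def conjugate_commutator)
  moreover have "conjugate G g a \<in> A" "conjugate G g b \<in> B"
    using A B g ab by (simp_all add: normal_conjugate_closed)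
  ultimately show "g \<otimes> h \<otimes> inv g \<in> comm_set G A B" by (auto simp: comm_set_conv_commutator)
qed

lemma commutator_generate_left_in_normal:
  assumes D: "D \<lhd> G" and S: "S \<subseteq> carrier G" and T: "T \<subseteq> carrier G"
    and ST: "\<And>x y. x \<in> S \<Longrightarrow> y \<in> T \<Longrightarrow> commutator G x y \<in> D"
    and u: "u \<in> generate G S" and y: "y \<in> T"
  shows "commutator G u y \<in> D"
  using u
proof (induct rule: generate.induct)
  case one
  then show ?case using y T D by (auto simp: commutator_def normal_def subgroup.one_closed)
next
  case (incl h)
  then show ?case using ST y by blast
next
  case (inv h)
  then have "h \<in> carrier G" "y \<in> carrier G" "commutator G h y \<in> D" using S T y ST by auto
  then show ?case using D
    by (simp add: commutator_inv_left normal_conjugate_closed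
        subgroup.m_inv_closed[OF normal_imp_subgroup])
next
  case (eng h1 h2)
  then have "h1 \<in> carrier G" "h2 \<in> carrier G" using S generate_in_carrier by auto
  then show ?case using eng D T y
    by (auto simp: commutator_mult_left intro!: normal_conjugate_closed
        subgroup.m_closed[OF normal_imp_subgroup])
qed

text \<open>Since \<open>[x, y] = [y, x]\<inverse>\<close>, the left-hand version applied twice handles both arguments.\<close>

lemma comm_subgroup_generate_subset:
  assumes D: "D \<lhd> G" and S: "S \<subseteq> carrier G" and T: "T \<subseteq> carrier G"
    and ST: "\<And>x y. x \<in> S \<Longrightarrow> y \<in> T \<Longrightarrow> commutator G x y \<in> D"
  shows "comm_subgroup G (generate G S) (generate G T) \<subseteq> D"
proof -
  have D_inv: "inv d \<in> D" if "d \<in> D" for d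
    using D that by (simp add: normal_imp_subgroup subgroup.m_inv_closed)
  have SG: "generate G S \<subseteq> carrier G" using S by (rule generate_in_carrier[THEN subsetI])
  have "commutator G v u \<in> D" if "v \<in> generate G T" "u \<in> generate G S" for u v
  proof (rule commutator_generate_left_in_normal[OF D T SG _ that])
    fix y u' assume "y \<in> T" "u' \<in> generate G S"
    then show "commutator G y u' \<in> D"
      using commutator_generate_left_in_normal[OF D S T ST] D_inv T SG
      by (metis inv_commutator subsetD)
  qed
  then have "commutator G u v \<in> D" if "u \<in> generate G S" "v \<in> generate G T" for u v
    using that D_inv SG generate_in_carrier[OF T] by (metis inv_commutator subsetD)
  then show ?thesis
    unfolding comm_subgroup_def
    by (intro generate_subgroup_incl normal_imp_subgroup[OF D])
       (auto simp: comm_set_conv_commutator)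
qed

lemma conjugate_inv_mult_eq:
  assumes "x \<in> carrier G" "y \<in> carrier G" "z \<in> carrier G" "w \<in> carrier G"
    and "z \<otimes> w = x \<otimes> y"
  shows "conjugate G x (inv y) \<otimes> z = x \<otimes> inv w"
proof -
  have "z = x \<otimes> y \<otimes> inv w"
    using assms by (simp add: inv_solve_right)
  then show ?thesis using assms by (simp add: group_normalize)
qed

end

lemma lcs_normal: "group G \<Longrightarrow> H \<lhd> G \<Longrightarrow> lcs G H n \<lhd> G"
  by (induction G H n rule: lcs.induct) (simp_all add: group.comm_subgroup_normal)

lemma (in group) derived_iter_normal: "derived_iter G n (carrier G) \<lhd> G"
  by (induct n) (simp_all add: derived_iter_def normal_self derived_is_normal)

text \<open>
  A group \<open>N\<close> generated by two homomorphic images \<open>i\<close> (for \<open>g\<close>) and \<open>p\<close> (for \<open>g\<^sup>\<phi>\<close>)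
  of \<open>G\<close> satisfying the defining relations of \<open>\<nu>(G)\<close>; \<open>\<nu>(G)\<close> itself is the instance
  \<open>nu_quotient_nu\<close> below, and working abstractly keeps the word calculus out of the algebra.
\<close>

locale nu_quotient = G: group G + N: group N + i: group_hom G N i + p: group_hom G N p
  for G :: "('a, 'b) monoid_scheme" (structure) and N :: "('n, 'c) monoid_scheme" and i p +
  assumes conjugate_i_commutator:
      "\<And>g a b. g \<in> carrier G \<Longrightarrow> a \<in> carrier G \<Longrightarrow> b \<in> carrier G \<Longrightarrow>
        conjugate N (i g) (commutator N (i a) (p b))
          = commutator N (i (conjugate G g a)) (p (conjugate G g b))"
    and conjugate_p_commutator:
      "\<And>g a b. g \<in> carrier G \<Longrightarrow> a \<in> carrier G \<Longrightarrow> b \<in> carrier G \<Longrightarrow>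
        conjugate N (p g) (commutator N (i a) (p b))
          = commutator N (i (conjugate G g a)) (p (conjugate G g b))"
    and generated_by_images: "carrier N = generate N (i ` carrier G \<union> p ` carrier G)"
begin

abbreviation tensor_elem :: "'a \<Rightarrow> 'a \<Rightarrow> 'n" where
  "tensor_elem a b \<equiv> commutator N (i a) (p b)"

abbreviation tensor :: "'a set \<Rightarrow> 'a set \<Rightarrow> 'n set" where
  "tensor A B \<equiv> comm_subgroup N (i ` A) (p ` B)"

abbreviation tensor_square :: "'n set" where
  "tensor_square \<equiv> tensor (carrier G) (carrier G)"

lemma tensor_elem_mult_left:
  "x \<in> carrier G \<Longrightarrow> y \<in> carrier G \<Longrightarrow> z \<in> carrier G \<Longrightarrow>
    tensor_elem (x \<otimes> y) z = conjugate N (i x) (tensor_elem y z) \<otimes>\<^bsub>N\<^esub> tensor_elem x z"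
  by (simp add: N.commutator_mult_left)

lemma tensor_elem_mult_right:
  "x \<in> carrier G \<Longrightarrow> y \<in> carrier G \<Longrightarrow> z \<in> carrier G \<Longrightarrow>
    tensor_elem x (y \<otimes> z) = tensor_elem x y \<otimes>\<^bsub>N\<^esub> conjugate N (p y) (tensor_elem x z)"
  by (simp add: N.commutator_mult_right)

lemma tensor_elem_inv_left:
  "x \<in> carrier G \<Longrightarrow> z \<in> carrier G \<Longrightarrow>
    tensor_elem (inv x) z = conjugate N (i (inv x)) (inv\<^bsub>N\<^esub> tensor_elem x z)"
  by (simp add: N.commutator_inv_left)

lemma tensor_elem_in_tensor: "a \<in> A \<Longrightarrow> b \<in> B \<Longrightarrow> tensor_elem a b \<in> tensor A B"
  by (simp add: N.commutator_in_comm_subgroup)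

lemma tensor_generators_closed:
  "A \<subseteq> carrier G \<Longrightarrow> B \<subseteq> carrier G \<Longrightarrow> comm_set N (i ` A) (p ` B) \<subseteq> carrier N"
  by (intro N.comm_set_closed) auto

lemma tensor_subgroup: "A \<subseteq> carrier G \<Longrightarrow> B \<subseteq> carrier G \<Longrightarrow> subgroup (tensor A B) N"
  unfolding comm_subgroup_def by (intro N.generate_is_subgroup tensor_generators_closed)

lemma tensor_normal:
  assumes A: "A \<lhd> G" and B: "B \<lhd> G"
  shows "tensor A B \<lhd> N"
proof -
  have AB: "A \<subseteq> carrier G" "B \<subseteq> carrier G" using A B by (simp_all add: G.normal_subset)
  then have gens: "comm_set N (i ` A) (p ` B) \<subseteq> carrier N"
    by (rule tensor_generators_closed)
  have "conjugate N s d \<in> tensor A B"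
    if s: "s \<in> i ` carrier G \<union> p ` carrier G" and d: "d \<in> tensor A B" for s d
  proof -
    obtain g where g: "g \<in> carrier G" "s = i g \<or> s = p g" using s by blast
    have "conjugate N s c \<in> tensor A B" if "c \<in> comm_set N (i ` A) (p ` B)" for c
    proof -
      obtain a b where ab: "a \<in> A" "b \<in> B" "c = tensor_elem a b"
        using \<open>c \<in> _\<close> by (auto simp: N.comm_set_conv_commutator)
      then have "conjugate N s c = tensor_elem (conjugate G g a) (conjugate G g b)"
        using g AB by (auto simp: conjugate_i_commutator conjugate_p_commutator subset_iff)
      then show ?thesis
        using A B g ab by (simp add: G.normal_conjugate_closed tensor_elem_in_tensor)
    qed
    then show ?thesis
      using d g gens unfolding comm_subgroup_def
      by (intro N.generate_conjugate_closed) auto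
  qed
  then show ?thesis
    by (intro N.normal_if_conjugate_closed_by_generators[OF generated_by_images]
        tensor_subgroup AB) (auto simp flip: i.hom_inv p.hom_inv)
qed

lemma conjugate_i_eq_conjugate_p:
  assumes AB: "A \<subseteq> carrier G" "B \<subseteq> carrier G" and g: "g \<in> carrier G"
    and y: "y \<in> tensor A B"
  shows "conjugate N (i g) y = conjugate N (p g) y"
  using y unfolding comm_subgroup_def
proof (induct rule: generate.induct)
  case one
  then show ?case using g by (simp add: conjugate_def)
next
  case (incl h)
  then show ?case
    using g AB by (auto simp: N.comm_set_conv_commutator conjugate_i_commutator
        conjugate_p_commutator subset_iff)
next
  case (inv h)
  then show ?case
    using g AB by (auto simp: N.comm_set_conv_commutator N.conjugate_inv
        conjugate_i_commutator conjugate_p_commutator subset_iff)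
next
  case (eng h1 h2)
  moreover have "comm_set N (i ` A) (p ` B) \<subseteq> carrier N"
    using AB by (rule tensor_generators_closed)
  ultimately have "h1 \<in> carrier N" "h2 \<in> carrier N" using N.generate_in_carrier by auto
  then show ?case using eng g by (simp add: N.conjugate_mult)
qed

lemma tensor_generate_subset:
  assumes D: "D \<lhd> N" and S: "S \<subseteq> carrier G" and T: "T \<subseteq> carrier G"
    and ST: "\<And>x y. x \<in> S \<Longrightarrow> y \<in> T \<Longrightarrow> tensor_elem x y \<in> D"
  shows "tensor (generate G S) (generate G T) \<subseteq> D"
proof -
  have "i ` generate G S = generate N (i ` S)" "p ` generate G T = generate N (p ` T)"
    using S T by (simp_all add: i.generate_img p.generate_img)
  then have "tensor (generate G S) (generate G T)
      = comm_subgroup N (generate N (i ` S)) (generate N (p ` T))" by simp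
  also have "\<dots> \<subseteq> D"
    by (rule N.comm_subgroup_generate_subset[OF D]) (use S T ST in auto)
  finally show ?thesis .
qed

lemma tensor_square_normal: "tensor_square \<lhd> N"
  by (intro tensor_normal G.normal_self)

lemma tensor_square_subgroup: "subgroup tensor_square N"
  by (intro tensor_subgroup subset_refl)

lemma conjugate_tensor_square_closed:
  "x \<in> carrier N \<Longrightarrow> y \<in> tensor_square \<Longrightarrow> conjugate N x y \<in> tensor_square"
  by (rule N.normal_conjugate_closed[OF tensor_square_normal])

lemma conjugate_i_eq_conjugate_p_square:
  "g \<in> carrier G \<Longrightarrow> y \<in> tensor_square \<Longrightarrow> conjugate N (i g) y = conjugate N (p g) y"
  by (rule conjugate_i_eq_conjugate_p[OF subset_refl subset_refl])

lemma tensor_elem_commutator_left: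
  assumes a: "a \<in> carrier G" and b: "b \<in> carrier G" and c: "c \<in> carrier G"
  shows "tensor_elem (commutator G a b) c = commutator N (tensor_elem a b) (p c)"
proof -
  define e where "e = conjugate G (inv b) c"
  have e: "e \<in> carrier G" and b_e: "conjugate G b e = c" and cb: "c \<otimes> b = b \<otimes> e"
    using b c by (simp_all add: e_def G.group_normalize)
  define x y z w where "x = tensor_elem a b" and "y = tensor_elem (conjugate G b a) c"
    and "z = tensor_elem a c" and "w = tensor_elem (conjugate G c a) (conjugate G c b)"
  have carr: "x \<in> carrier N" "y \<in> carrier N" "z \<in> carrier N" "w \<in> carrier N"
    using a b c by (simp_all add: x_def y_def z_def w_def)
  define u where "u = inv\<^bsub>N\<^esub> tensor_elem a e"
  have u: "u \<in> tensor_square" "u \<in> carrier N"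
    using a e tensor_square_subgroup
    by (simp_all add: u_def tensor_elem_in_tensor subgroup.m_inv_closed)
  have "tensor_elem (conjugate G b (inv a)) c = conjugate N (i b) (tensor_elem (inv a) e)"
    using conjugate_i_commutator[of b "inv a" e] a b e b_e by simp
  also have "\<dots> = conjugate N (i b) (conjugate N (i (inv a)) u)"
    by (simp only: tensor_elem_inv_left[OF a e] u_def)
  also have "\<dots> = conjugate N (p b) (conjugate N (i (inv a)) u)"
    using a b u by (intro conjugate_i_eq_conjugate_p_square) (simp_all add: conjugate_tensor_square_closed)
  finally have "tensor_elem (commutator G a b) c
      = conjugate N (i a) (conjugate N (p b) (conjugate N (i (inv a)) u)) \<otimes>\<^bsub>N\<^esub> z"
    using a b c tensor_elem_mult_left[of a "conjugate G b (inv a)" c]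
    by (simp add: G.commutator_conv_conjugate z_def)
  also have "\<dots> = conjugate N x (conjugate N (p b) u) \<otimes>\<^bsub>N\<^esub> z"
    using a b u by (simp add: x_def N.group_normalize)
  also have "conjugate N (p b) u = inv\<^bsub>N\<^esub> y"
    using a b e b_e by (simp add: u_def y_def N.conjugate_inv conjugate_p_commutator)
  also have "conjugate N x (inv\<^bsub>N\<^esub> y) \<otimes>\<^bsub>N\<^esub> z = x \<otimes>\<^bsub>N\<^esub> inv\<^bsub>N\<^esub> w"
  proof (rule N.conjugate_inv_mult_eq[OF carr])
    have "z \<otimes>\<^bsub>N\<^esub> w = tensor_elem a (c \<otimes> b)"
      using a b c tensor_elem_mult_right[of a c b] conjugate_p_commutator[of c a b]
      by (simp add: z_def w_def)
    also have "\<dots> = tensor_elem a (b \<otimes> e)" by (simp add: cb)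
    also have "\<dots> = x \<otimes>\<^bsub>N\<^esub> y"
      using a b e b_e tensor_elem_mult_right[of a b e] conjugate_p_commutator[of b a e]
      by (simp add: x_def y_def)
    finally show "z \<otimes>\<^bsub>N\<^esub> w = x \<otimes>\<^bsub>N\<^esub> y" .
  qed
  also have "w = conjugate N (p c) x"
    using a b c by (simp add: x_def w_def conjugate_p_commutator)
  also have "x \<otimes>\<^bsub>N\<^esub> inv\<^bsub>N\<^esub> conjugate N (p c) x = commutator N x (p c)"
    using carr c by (simp add: N.commutator_conv_conjugate N.conjugate_inv)
  finally show ?thesis by (simp add: x_def)
qed

lemma conjugate_tensor_elem:
  assumes c: "c \<in> carrier G" and d: "d \<in> carrier G" and v: "v \<in> tensor_square"
  shows "conjugate N (tensor_elem c d) v = conjugate N (p (commutator G c d)) v"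
proof -
  have v_carr: "v \<in> carrier N"
    using v tensor_square_subgroup by (rule subgroup.mem_carrier[rotated])
  define v1 where "v1 = conjugate N (p (inv d)) v"
  have v1: "v1 \<in> tensor_square"
    using v d by (simp add: v1_def conjugate_tensor_square_closed)
  have inner: "conjugate N (inv\<^bsub>N\<^esub> i c) v1 = conjugate N (inv\<^bsub>N\<^esub> p c) v1"
    using conjugate_i_eq_conjugate_p_square[of "inv c" v1] c v1 by simp
  have outer: "conjugate N (p d) (conjugate N (inv\<^bsub>N\<^esub> p c) v1) \<in> tensor_square"
    using c d v1 by (simp add: conjugate_tensor_square_closed)
  have "conjugate N (tensor_elem c d) v
      = conjugate N (i c) (conjugate N (p d) (conjugate N (inv\<^bsub>N\<^esub> i c) v1))"
    using c d v_carr by (simp add: v1_def N.group_normalize)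
  also have "\<dots> = conjugate N (p c) (conjugate N (p d) (conjugate N (inv\<^bsub>N\<^esub> p c) v1))"
    using c inner outer by (simp add: conjugate_i_eq_conjugate_p_square)
  also have "\<dots> = conjugate N (p (commutator G c d)) v"
    using c d v_carr by (simp add: v1_def commutator_def N.group_normalize)
  finally show ?thesis .
qed

lemma commutator_tensor_elem:
  assumes "a \<in> carrier G" "b \<in> carrier G" "c \<in> carrier G" "d \<in> carrier G"
  shows "commutator N (tensor_elem a b) (tensor_elem c d)
    = tensor_elem (commutator G a b) (commutator G c d)"
proof -
  have ab: "inv\<^bsub>N\<^esub> tensor_elem a b \<in> tensor_square"
    using assms tensor_square_subgroup by (simp add: tensor_elem_in_tensor subgroup.m_inv_closed)
  have "commutator N (tensor_elem a b) (tensor_elem c d)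
      = tensor_elem a b \<otimes>\<^bsub>N\<^esub> conjugate N (tensor_elem c d) (inv\<^bsub>N\<^esub> tensor_elem a b)"
    using assms by (simp add: N.commutator_conv_conjugate)
  also have "\<dots> = tensor_elem a b \<otimes>\<^bsub>N\<^esub>
      conjugate N (p (commutator G c d)) (inv\<^bsub>N\<^esub> tensor_elem a b)"
    using assms ab by (simp add: conjugate_tensor_elem)
  also have "\<dots> = commutator N (tensor_elem a b) (p (commutator G c d))"
    using assms by (simp add: N.commutator_conv_conjugate)
  also have "\<dots> = tensor_elem (commutator G a b) (commutator G c d)"
    using assms by (simp add: tensor_elem_commutator_left)
  finally show ?thesis .
qed

theorem comm_subgroup_tensor:
  assumes A: "A \<lhd> G" and B: "B \<lhd> G" and C: "C \<lhd> G" and D: "D \<lhd> G"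
  shows "comm_subgroup N (tensor A B) (tensor C D)
    = tensor (comm_subgroup G A B) (comm_subgroup G C D)"
proof
  have sub: "A \<subseteq> carrier G" "B \<subseteq> carrier G" "C \<subseteq> carrier G" "D \<subseteq> carrier G"
    using A B C D by (simp_all add: G.normal_subset)
  show "comm_subgroup N (tensor A B) (tensor C D)
      \<subseteq> tensor (comm_subgroup G A B) (comm_subgroup G C D)"
    unfolding comm_subgroup_def[of N "i ` A"] comm_subgroup_def[of N "i ` C"]
  proof (rule N.comm_subgroup_generate_subset)
    show "tensor (comm_subgroup G A B) (comm_subgroup G C D) \<lhd> N"
      using A B C D by (intro tensor_normal G.comm_subgroup_normal)
    fix x y assume "x \<in> comm_set N (i ` A) (p ` B)" "y \<in> comm_set N (i ` C) (p ` D)"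
    then obtain a b c d where abcd: "a \<in> A" "b \<in> B" "c \<in> C" "d \<in> D"
      and "x = tensor_elem a b" "y = tensor_elem c d"
      by (auto simp: N.comm_set_conv_commutator)
    moreover have "a \<in> carrier G" "b \<in> carrier G" "c \<in> carrier G" "d \<in> carrier G"
      using sub abcd by auto
    ultimately show "commutator N x y \<in> tensor (comm_subgroup G A B) (comm_subgroup G C D)"
      by (simp add: commutator_tensor_elem tensor_elem_in_tensor G.commutator_in_comm_subgroup)
  qed (use sub in \<open>simp_all add: tensor_generators_closed\<close>)
  show "tensor (comm_subgroup G A B) (comm_subgroup G C D)
      \<subseteq> comm_subgroup N (tensor A B) (tensor C D)"
    unfolding comm_subgroup_def[of G A] comm_subgroup_def[of G C]
  proof (rule tensor_generate_subset)
    show "comm_subgroup N (tensor A B) (tensor C D) \<lhd> N"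
      using A B C D by (intro N.comm_subgroup_normal tensor_normal)
    fix x y assume "x \<in> comm_set G A B" "y \<in> comm_set G C D"
    then obtain a b c d where abcd: "a \<in> A" "b \<in> B" "c \<in> C" "d \<in> D"
      and "x = commutator G a b" "y = commutator G c d"
      by (auto simp: G.comm_set_conv_commutator)
    moreover have "a \<in> carrier G" "b \<in> carrier G" "c \<in> carrier G" "d \<in> carrier G"
      using sub abcd by auto
    ultimately show "tensor_elem x y \<in> comm_subgroup N (tensor A B) (tensor C D)"
      by (simp flip: commutator_tensor_elem
          add: N.commutator_in_comm_subgroup tensor_elem_in_tensor)
  qed (use sub in \<open>simp_all add: G.comm_set_closed\<close>)
qed

lemma derived_tensor:
  "H \<lhd> G \<Longrightarrow> derived N (tensor H H) = tensor (derived G H) (derived G H)"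
  by (simp add: N.derived_eq_comm_subgroup G.derived_eq_comm_subgroup comm_subgroup_tensor)

lemma derived_iter_tensor_square:
  "derived_iter N n tensor_square
    = tensor (derived_iter G n (carrier G)) (derived_iter G n (carrier G))"
proof (induct n)
  case 0
  then show ?case by (simp add: derived_iter_def)
next
  case (Suc n)
  then show ?case
    using derived_tensor[OF G.derived_iter_normal[of n]] by (simp add: derived_iter_def)
qed

lemma lcs_tensor_square_left:
  "lcs N tensor_square (Suc (Suc m))
    = tensor (lcs G (derived G (carrier G)) (Suc m)) (derived G (carrier G))"
proof (induct m)
  case 0
  then show ?case
    by (simp add: comm_subgroup_tensor G.normal_self flip: G.derived_eq_comm_subgroup)
next
  case (Suc m)
  then show ?case
    by (simp add: comm_subgroup_tensor G.normal_self G.derived_self_is_normal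
        lcs_normal G.group_axioms flip: G.derived_eq_comm_subgroup)
qed

lemma lcs_tensor_square_right:
  "lcs N tensor_square (Suc (Suc m))
    = tensor (derived G (carrier G)) (lcs G (derived G (carrier G)) (Suc m))"
proof (cases m)
  case 0
  then show ?thesis using lcs_tensor_square_left[of 0] by simp
next
  case (Suc k)
  let ?L = "lcs G (derived G (carrier G)) (Suc k)" and ?G' = "derived G (carrier G)"
  have normal: "?L \<lhd> G" "?G' \<lhd> G"
    by (simp_all add: lcs_normal G.group_axioms G.derived_self_is_normal)
  have "lcs N tensor_square (Suc (Suc m)) = comm_subgroup N (tensor ?L ?G') tensor_square"
    using Suc lcs_tensor_square_left[of k] by simp
  also have "\<dots> = comm_subgroup N tensor_square (tensor ?L ?G')"
    using normal by (intro N.comm_subgroup_commute)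
      (simp_all add: tensor_normal G.normal_self N.normal_subset)
  also have "\<dots> = tensor ?G' (comm_subgroup G ?L ?G')"
    using normal by (simp add: comm_subgroup_tensor G.normal_self flip: G.derived_eq_comm_subgroup)
  finally show ?thesis using Suc by simp
qed

end

context group
begin

lemma nu_words_append [simp]: "v @ w \<in> nu_words G \<longleftrightarrow> v \<in> nu_words G \<and> w \<in> nu_words G"
  by (auto simp: nu_words_def)

lemma nu_words_Cons [simp]: "(g, s) # w \<in> nu_words G \<longleftrightarrow> g \<in> carrier G \<and> w \<in> nu_words G"
  by (auto simp: nu_words_def)

lemma nu_words_Nil [simp]: "[] \<in> nu_words G"
  by (simp add: nu_words_def)

lemma winv_Nil [simp]: "winv G [] = []"
  by (simp add: winv_def)

lemma winv_Cons [simp]: "winv G ((g, s) # w) = winv G w @ [(inv g, s)]"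
  by (simp add: winv_def)

lemma winv_nu_words: "w \<in> nu_words G \<Longrightarrow> winv G w \<in> nu_words G"
  by (induct w) auto

lemma nu_eqv_nu_words: "nu_eqv G v w \<Longrightarrow> v \<in> nu_words G \<and> w \<in> nu_words G"
  by (induct rule: nu_eqv.induct) (auto simp: wconj_def wcomm_def)

lemma nu_class_eq: "nu_eqv G v w \<Longrightarrow> nu_class G v = nu_class G w"
  unfolding nu_class_def by (auto intro: nu_eqv.trans nu_eqv.sym)

lemma nu_class_self: "w \<in> nu_words G \<Longrightarrow> w \<in> nu_class G w"
  unfolding nu_class_def by (simp add: nu_eqv.refl)

lemma nu_eqv_append: "nu_eqv G v v' \<Longrightarrow> nu_eqv G w w' \<Longrightarrow> nu_eqv G (v @ w) (v' @ w')"
  using nu_eqv.ctxt[of G v v' "[]" w] nu_eqv.ctxt[of G w w' v' "[]"]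
  by (auto dest: nu_eqv_nu_words intro: nu_eqv.trans)

lemma nu_eqv_winv_append: "w \<in> nu_words G \<Longrightarrow> nu_eqv G (winv G w @ w) []"
proof (induct w)
  case Nil
  then show ?case by (auto intro: nu_eqv.refl)
next
  case (Cons x w)
  obtain g s where x: "x = (g, s)" by (cases x)
  have g: "g \<in> carrier G" and w: "w \<in> nu_words G" using Cons x by auto
  have "nu_eqv G [(inv g, s), (g, s)] [(\<one>, s)]"
    using g nu_eqv.mult[of "inv g" G g s] by simp
  then have "nu_eqv G [(inv g, s), (g, s)] []"
    by (auto intro: nu_eqv.trans nu_eqv.one)
  then have "nu_eqv G (winv G w @ [(inv g, s), (g, s)] @ w) (winv G w @ [] @ w)"
    using g w winv_nu_words by (intro nu_eqv.ctxt) auto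
  then show ?case using Cons w x by (auto intro: nu_eqv.trans)
qed

lemma nu_carrier: "carrier (nu G) = nu_class G ` nu_words G"
  by (simp add: nu_def)

lemma nu_one: "\<one>\<^bsub>nu G\<^esub> = nu_class G []"
  by (simp add: nu_def)

text \<open>Multiplication in \<open>\<nu>(G)\<close> picks representatives with \<open>SOME\<close>; this shows it is well defined.\<close>

lemma nu_mult:
  assumes "v \<in> nu_words G" "w \<in> nu_words G"
  shows "nu_class G v \<otimes>\<^bsub>nu G\<^esub> nu_class G w = nu_class G (v @ w)"
proof -
  have "nu_eqv G v (SOME a. a \<in> nu_class G v)" "nu_eqv G w (SOME b. b \<in> nu_class G w)"
    using someI[of "\<lambda>a. a \<in> nu_class G v", OF nu_class_self[OF assms(1)]]
      someI[of "\<lambda>b. b \<in> nu_class G w", OF nu_class_self[OF assms(2)]]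
    by (simp_all add: nu_class_def)
  then show ?thesis
    unfolding nu_def by (simp add: nu_class_eq[OF nu_eqv_append])
qed

lemma nu_group: "group (nu G)"
proof (rule groupI)
  fix x assume "x \<in> carrier (nu G)"
  then obtain w where w: "w \<in> nu_words G" "x = nu_class G w" by (auto simp: nu_carrier)
  show "\<exists>y\<in>carrier (nu G). y \<otimes>\<^bsub>nu G\<^esub> x = \<one>\<^bsub>nu G\<^esub>"
    using w winv_nu_words nu_class_eq[OF nu_eqv_winv_append]
    by (intro bexI[of _ "nu_class G (winv G w)"]) (auto simp: nu_carrier nu_mult nu_one)
qed (auto simp: nu_carrier nu_mult nu_one)

lemma nu_letter_mult:
  "g \<in> carrier G \<Longrightarrow> h \<in> carrier G \<Longrightarrow>
    nu_class G [(g, s)] \<otimes>\<^bsub>nu G\<^esub> nu_class G [(h, s)] = nu_class G [(g \<otimes> h, s)]"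
  by (simp add: nu_mult nu_class_eq nu_eqv.mult)

lemma nu_letter_inv:
  assumes "g \<in> carrier G"
  shows "inv\<^bsub>nu G\<^esub> (nu_class G [(g, s)]) = nu_class G [(inv g, s)]"
proof (rule group.inv_equality[OF nu_group])
  show "nu_class G [(inv g, s)] \<otimes>\<^bsub>nu G\<^esub> nu_class G [(g, s)] = \<one>\<^bsub>nu G\<^esub>"
    using assms nu_eqv_winv_append[of "[(g, s)]"] by (simp add: nu_mult nu_one nu_class_eq)
qed (use assms in \<open>simp_all add: nu_carrier\<close>)

lemma nu_inc_hom: "nu_inc G \<in> hom G (nu G)"
  by (rule homI) (simp_all add: nu_inc_def nu_letter_mult nu_carrier)

lemma nu_phi_hom: "nu_phi G \<in> hom G (nu G)"
  by (rule homI) (simp_all add: nu_phi_def nu_letter_mult nu_carrier)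

lemma nu_generated_by_images:
  "carrier (nu G) = generate (nu G) (nu_inc G ` carrier G \<union> nu_phi G ` carrier G)"
proof
  have "nu_inc G ` carrier G \<union> nu_phi G ` carrier G \<subseteq> carrier (nu G)"
    by (auto simp: nu_inc_def nu_phi_def nu_carrier)
  then show "generate (nu G) (nu_inc G ` carrier G \<union> nu_phi G ` carrier G) \<subseteq> carrier (nu G)"
    by (rule group.generate_in_carrier[OF nu_group, THEN subsetI])
  have "nu_class G w \<in> generate (nu G) (nu_inc G ` carrier G \<union> nu_phi G ` carrier G)"
    if "w \<in> nu_words G" for w
    using that
  proof (induct w)
    case Nil
    then show ?case using generate.one[of "nu G"] by (simp add: nu_one)
  next
    case (Cons x w)
    obtain g s where x: "x = (g, s)" by (cases x)
    have g: "g \<in> carrier G" and w: "w \<in> nu_words G" using Cons x by auto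
    have "nu_class G [(g, s)] \<in> generate (nu G) (nu_inc G ` carrier G \<union> nu_phi G ` carrier G)"
      using g by (intro generate.incl) (cases s, auto simp: nu_inc_def nu_phi_def)
    then show ?case
      using generate.eng Cons.hyps[OF w] g w x by (fastforce simp: nu_mult)
  qed
  then show "carrier (nu G) \<subseteq> generate (nu G) (nu_inc G ` carrier G \<union> nu_phi G ` carrier G)"
    by (auto simp: nu_carrier)
qed

lemma nu_quotient_nu: "nu_quotient G (nu G) (nu_inc G) (nu_phi G)"
proof -
  have rels:
    "conjugate (nu G) (nu_inc G g) (commutator (nu G) (nu_inc G a) (nu_phi G b))
      = commutator (nu G) (nu_inc G (conjugate G g a)) (nu_phi G (conjugate G g b))"
    "conjugate (nu G) (nu_phi G g) (commutator (nu G) (nu_inc G a) (nu_phi G b))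
      = commutator (nu G) (nu_inc G (conjugate G g a)) (nu_phi G (conjugate G g b))"
    if "g \<in> carrier G" "a \<in> carrier G" "b \<in> carrier G" for g a b
    using that nu_eqv.rel1[of a G b g] nu_eqv.rel2[of a G b g]
    by (simp_all add: conjugate_def commutator_def nu_inc_def nu_phi_def nu_letter_inv
        nu_mult wconj_def wcomm_def nu_class_eq)
  show ?thesis
    by (intro nu_quotient.intro nu_quotient_axioms.intro group_hom.intro group_hom_axioms.intro
        group_axioms nu_group nu_inc_hom nu_phi_hom rels nu_generated_by_images)
qed

end

lemma nu_tensor_eq_comm_subgroup:
  "nu_tensor G A B = comm_subgroup (nu G) (nu_inc G ` A) (nu_phi G ` B)"
  by (simp add: nu_tensor_def comm_subgroup_def comm_set_def)

theorem proposition1p3: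
  fixes G :: "('a, 'b) monoid_scheme"
  assumes "group G"
  shows "(\<forall>n::nat. derived_iter (nu G) n (nu_tensor G (carrier G) (carrier G))
                = nu_tensor G (derived_iter G n (carrier G)) (derived_iter G n (carrier G)))
       \<and> (\<forall>n::nat. n \<ge> 1 \<longrightarrow>
            lcs (nu G) (nu_tensor G (carrier G) (carrier G)) (n + 1)
              = nu_tensor G (lcs G (derived G (carrier G)) n) (derived G (carrier G))
          \<and> lcs (nu G) (nu_tensor G (carrier G) (carrier G)) (n + 1)
              = nu_tensor G (derived G (carrier G)) (lcs G (derived G (carrier G)) n))"
proof -
  interpret nu_quotient G "nu G" "nu_inc G" "nu_phi G"
    using assms by (rule group.nu_quotient_nu)
  let ?G' = "derived G (carrier G)"
  have "lcs (nu G) tensor_square (n + 1) = tensor (lcs G ?G' n) ?G'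
      \<and> lcs (nu G) tensor_square (n + 1) = tensor ?G' (lcs G ?G' n)" if "n \<ge> 1" for n
    using that lcs_tensor_square_left[of "n - 1"] lcs_tensor_square_right[of "n - 1"]
    by (cases n) simp_all
  then show ?thesis
    unfolding nu_tensor_eq_comm_subgroup using derived_iter_tensor_square by blast
qed

end
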